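(* There exists a unique $h\in\Delta_f$ such that $Ph=\lambda h$. Moreover $h$ is strictly positive on $\Omega$.
   Context: Let $I=[0,1)$ carry a metric $d_I$, fix $\theta\in(0,1)$, and let $\Omega=I^{\mathbb Z}$ with metric $d(x,y)=\sup_{k\in\mathbb Z}\theta^{|k|}d_I(x_k,y_k)$. Let $\tau:I\to I$ have full branches, so that $b=\#\tau^{-1}(t)$ is constant; let $p_\tau$ be a fixed point of $\tau$. Assume there is $\eta\in(0,1)$ such that every inverse branch $\zeta$ of $\tau$ satisfies $d_I(\zeta(s),\zeta(t))\le\eta\,d_I(s,t)$. Let $(\bar\tau x)_i=\tau(x_i)$. Let $\pi_k:\Omega\to\Omega$ keep the coordinates $|i|\le k$ and set the others to $p_\tau$; $\Phi_k=\Phi\circ\pi_k$. Fix $\beta\in(0,1]$; $|\Phi|_\infty=\sup|\Phi|$, $|\Phi|_\beta=\sup_{k\in\mathbb N}\sup_{x\neq y}|\Phi_k(x)-\Phi_k(y)|/d(x,y)^\beta$, $\|\Phi\|=|\Phi|_\infty+|\Phi|_\beta$, $\mathcal C=\{\Phi\in C(\Omega):\|\Phi\|<\infty\}$. An inverse branch of order $k$ is a choice $\zeta=(\zeta_j)_{|j|\le k}$ of inverse branches of $\tau$, with $(\zeta_x)_j=\zeta_j(x_j)$ for $|j|\le k$, $(\zeta_x)_j=x_j$ otherwise; $b_k=b^{2k+1}$. For real $f\in\mathcal C$, $P_k\Phi(x)=b_k^{-1}\sum_{|\zeta|=k}e^{f(\pi_k\zeta_x)}\Phi(\pi_k\zeta_x)$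 and $P\Phi=\lim_kP_k\Phi$ pointwise. Fix a Borel probability measure $\nu_0$ on $\Omega$ with $P^*\nu_0=\lambda\nu_0$, where $\lambda=\int P\mathbf 1\,d\nu_0$ (such exists). Put $B(z)=\exp\!\left(|f|_\beta\frac{\eta^\beta}{1-\eta^\beta}z^\beta\right)$ for $z\ge0$ and $\Delta_f=\{\Phi\in C(\Omega):\Phi\ge0,\ \nu_0(\Phi)=1,\ \Phi(x)\le B(d(x,y))\Phi(y)\ \forall x,y\in\Omega\}$. *)

theory Defs
  imports "HOL-Probability.Probability"
begin

definition Icar :: "real set" where
  "Icar = {0..<1}"

definition Omega :: "(int \<Rightarrow> real) set" where
  "Omega = {x. \<forall>i. x i \<in> Icar}"

text \<open>d_I is a metric on I (given as a function on reals, only its values on I matter).\<close>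

definition is_metric_on :: "real set \<Rightarrow> (real \<Rightarrow> real \<Rightarrow> real) \<Rightarrow> bool" where
  "is_metric_on S dI \<longleftrightarrow>
     (\<forall>s\<in>S. \<forall>t\<in>S. 0 \<le> dI s t \<and> (dI s t = 0 \<longleftrightarrow> s = t) \<and> dI s t = dI t s) \<and>
     (\<forall>s\<in>S. \<forall>t\<in>S. \<forall>u\<in>S. dI s u \<le> dI s t + dI t u)"

definition dOm :: "(real \<Rightarrow> real \<Rightarrow> real) \<Rightarrow> real \<Rightarrow> (int \<Rightarrow> real) \<Rightarrow> (int \<Rightarrow> real) \<Rightarrow> real" where
  "dOm dI \<theta> x y = (SUP k. \<theta> ^ nat \<bar>k\<bar> * dI (x k) (y k))"

definition piK :: "real \<Rightarrow> nat \<Rightarrow> (int \<Rightarrow> real) \<Rightarrow> (int \<Rightarrow> real)" where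
  "piK p k x = (\<lambda>i. if \<bar>i\<bar> \<le> int k then x i else p)"

definition d_continuous :: "(real \<Rightarrow> real \<Rightarrow> real) \<Rightarrow> real \<Rightarrow> ((int \<Rightarrow> real) \<Rightarrow> real) \<Rightarrow> bool" where
  "d_continuous dI \<theta> \<Phi> \<longleftrightarrow>
     (\<forall>x\<in>Omega. \<forall>e>0. \<exists>\<delta>>0. \<forall>y\<in>Omega. dOm dI \<theta> x y < \<delta> \<longrightarrow> \<bar>\<Phi> y - \<Phi> x\<bar> < e)"

definition holder_quots ::
  "(real \<Rightarrow> real \<Rightarrow> real) \<Rightarrow> real \<Rightarrow> real \<Rightarrow> real \<Rightarrow> ((int \<Rightarrow> real) \<Rightarrow> real) \<Rightarrow> real set" where
  "holder_quots dI \<theta> p \<beta> \<Phi> =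
     {\<bar>\<Phi> (piK p k x) - \<Phi> (piK p k y)\<bar> / (dOm dI \<theta> x y) powr \<beta> | k x y.
        x \<in> Omega \<and> y \<in> Omega \<and> x \<noteq> y}"

definition holder_semi ::
  "(real \<Rightarrow> real \<Rightarrow> real) \<Rightarrow> real \<Rightarrow> real \<Rightarrow> real \<Rightarrow> ((int \<Rightarrow> real) \<Rightarrow> real) \<Rightarrow> real" where
  "holder_semi dI \<theta> p \<beta> \<Phi> = Sup (holder_quots dI \<theta> p \<beta> \<Phi>)"

definition in_C ::
  "(real \<Rightarrow> real \<Rightarrow> real) \<Rightarrow> real \<Rightarrow> real \<Rightarrow> real \<Rightarrow> ((int \<Rightarrow> real) \<Rightarrow> real) \<Rightarrow> bool" where
  "in_C dI \<theta> p \<beta> \<Phi> \<longleftrightarrow>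
     d_continuous dI \<theta> \<Phi> \<and> bdd_above {\<bar>\<Phi> x\<bar> | x. x \<in> Omega} \<and>
     bdd_above (holder_quots dI \<theta> p \<beta> \<Phi>)"

text \<open>Inverse branches of order k: choices (zeta_j)_{|j|<=k} of inverse branches from Z.\<close>

definition branches :: "(real \<Rightarrow> real) set \<Rightarrow> nat \<Rightarrow> (int \<Rightarrow> (real \<Rightarrow> real)) set" where
  "branches Z k = PiE {- int k .. int k} (\<lambda>_. Z)"

definition apply_branch :: "nat \<Rightarrow> (int \<Rightarrow> (real \<Rightarrow> real)) \<Rightarrow> (int \<Rightarrow> real) \<Rightarrow> (int \<Rightarrow> real)" where
  "apply_branch k \<zeta> x = (\<lambda>j. if \<bar>j\<bar> \<le> int k then \<zeta> j (x j) else x j)"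

definition Pk ::
  "(real \<Rightarrow> real) set \<Rightarrow> real \<Rightarrow> ((int \<Rightarrow> real) \<Rightarrow> real) \<Rightarrow> nat \<Rightarrow> ((int \<Rightarrow> real) \<Rightarrow> real)
     \<Rightarrow> (int \<Rightarrow> real) \<Rightarrow> real" where
  "Pk Z p f k \<Phi> x =
     (1 / real (card Z ^ (2 * k + 1))) *
     (\<Sum>\<zeta>\<in>branches Z k. exp (f (piK p k (apply_branch k \<zeta> x))) * \<Phi> (piK p k (apply_branch k \<zeta> x)))"

definition Ptr ::
  "(real \<Rightarrow> real) set \<Rightarrow> real \<Rightarrow> ((int \<Rightarrow> real) \<Rightarrow> real) \<Rightarrow> ((int \<Rightarrow> real) \<Rightarrow> real)
     \<Rightarrow> (int \<Rightarrow> real) \<Rightarrow> real" where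
  "Ptr Z p f \<Phi> x = lim (\<lambda>k. Pk Z p f k \<Phi> x)"

text \<open>Open subsets of Omega for the metric d (generating the Borel sigma-algebra).\<close>

definition d_open :: "(real \<Rightarrow> real \<Rightarrow> real) \<Rightarrow> real \<Rightarrow> (int \<Rightarrow> real) set \<Rightarrow> bool" where
  "d_open dI \<theta> U \<longleftrightarrow> U \<subseteq> Omega \<and>
     (\<forall>x\<in>U. \<exists>e>0. \<forall>y\<in>Omega. dOm dI \<theta> x y < e \<longrightarrow> y \<in> U)"

definition Bfun :: "real \<Rightarrow> real \<Rightarrow> real \<Rightarrow> real \<Rightarrow> real" where
  "Bfun fsemi \<eta> \<beta> z = exp (fsemi * (\<eta> powr \<beta> / (1 - \<eta> powr \<beta>)) * z powr \<beta>)"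

definition Delta_f ::
  "(real \<Rightarrow> real \<Rightarrow> real) \<Rightarrow> real \<Rightarrow> real \<Rightarrow> real \<Rightarrow> real \<Rightarrow> ((int \<Rightarrow> real) \<Rightarrow> real)
     \<Rightarrow> (int \<Rightarrow> real) measure \<Rightarrow> ((int \<Rightarrow> real) \<Rightarrow> real) set" where
  "Delta_f dI \<theta> p \<beta> \<eta> f \<nu> =
     {\<Phi>. d_continuous dI \<theta> \<Phi> \<and> (\<forall>x\<in>Omega. 0 \<le> \<Phi> x) \<and> integral\<^sup>L \<nu> \<Phi> = 1 \<and>
          (\<forall>x\<in>Omega. \<forall>y\<in>Omega.
             \<Phi> x \<le> Bfun (holder_semi dI \<theta> p \<beta> f) \<eta> \<beta> (dOm dI \<theta> x y) * \<Phi> y)}"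

end

theory Submission
  imports Defs
begin

text \<open>
  For \<open>c \<ge> 0\<close> let \<open>\<Lambda>\<^sub>c\<close> be the cone of nonnegative functions with
  \<open>\<Phi> x \<le> exp (c d(x,y)\<^sup>\<beta>) \<Phi> y\<close>. Inverse branches contract \<open>d\<close> by \<open>\<eta>\<close> and \<open>f\<close> is
  \<open>\<beta>\<close>-Hoelder with constant \<open>S = |f|\<^sub>\<beta>\<close>, so every \<open>P\<^sub>k\<close> maps \<open>\<Lambda>\<^sub>c\<close> into
  \<open>\<Lambda>\<^bsub>r(S+c)\<^esub>\<close> with \<open>r = \<eta>\<^sup>\<beta>\<close>. The fixed point \<open>A = S r/(1-r)\<close> of \<open>c \<mapsto> r(S+c)\<close> is the
  exponent in the definition of \<open>\<Delta>\<^sub>f\<close>, and \<open>A + 1\<close> is mapped to \<open>A + r < A + 1\<close>.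
  On these cones \<open>P\<^sub>k \<Phi>\<close> converges geometrically, and \<open>L = P/\<lambda>\<close> preserves the
  \<open>\<nu>\<^sub>0\<close>-integral. A normalised element of \<open>\<Lambda>\<^bsub>A+r\<^esub>\<close> is bounded below by a constant
  \<open>m > 0\<close>; the gap between \<open>A + r\<close> and \<open>A + 1\<close> allows to split off a multiple of \<open>1\<close>:
  \<open>L \<Phi> = \<epsilon> + (1 - \<epsilon>) \<Phi>'\<close> with \<open>\<Phi>'\<close> again normalised in \<open>\<Lambda>\<^bsub>A+1\<^esub>\<close>. Hence \<open>L\<^sup>n\<close>
  contracts sup-distances of normalised elements by \<open>(1 - \<epsilon>)\<^sup>n\<close>, the iterates
  \<open>L\<^sup>n 1\<close> converge to the unique normalised fixed point \<open>h \<in> \<Lambda>\<^sub>A\<close>, and \<open>h\<close> inherits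
  the positive lower bound.
\<close>

lemma sum_div_card_le:
  fixes X :: "'a \<Rightarrow> real"
  assumes "finite A" "A \<noteq> {}" "\<And>a. a \<in> A \<Longrightarrow> X a \<le> c"
  shows "(\<Sum>a\<in>A. X a) / real (card A) \<le> c"
  using sum_bounded_above[of A X c] assms by (simp add: divide_le_eq card_gt_0_iff mult.commute)

lemma sum_div_card_ge:
  fixes X :: "'a \<Rightarrow> real"
  assumes "finite A" "A \<noteq> {}" "\<And>a. a \<in> A \<Longrightarrow> c \<le> X a"
  shows "c \<le> (\<Sum>a\<in>A. X a) / real (card A)"
  using sum_bounded_below[of A c X] assms by (simp add: le_divide_eq card_gt_0_iff mult.commute)

lemma abs_sum_div_card_le:
  fixes X :: "'a \<Rightarrow> real"
  assumes "finite A" "A \<noteq> {}" "\<And>a. a \<in> A \<Longrightarrow> \<bar>X a\<bar> \<le> c"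
  shows "\<bar>(\<Sum>a\<in>A. X a) / real (card A)\<bar> \<le> c"
proof -
  have "(\<Sum>a\<in>A. X a) / real (card A) \<le> c"
    by (rule sum_div_card_le[OF assms(1,2)]) (use assms(3) abs_le_iff in force)
  moreover have "-c \<le> (\<Sum>a\<in>A. X a) / real (card A)"
    by (rule sum_div_card_ge[OF assms(1,2)]) (use assms(3) abs_le_iff in force)
  ultimately show ?thesis by (auto simp: abs_le_iff)
qed

lemma sum_PiE_insert_const:
  fixes H :: "('a \<Rightarrow> 'b) \<Rightarrow> real"
  assumes "a \<notin> S" "\<And>g y. H (g(a := y)) = H g"
  shows "(\<Sum>\<zeta>\<in>PiE (insert a S) (\<lambda>_. Z). H \<zeta>) = real (card Z) * (\<Sum>g\<in>PiE S (\<lambda>_. Z). H g)"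
proof -
  have "(\<Sum>\<zeta>\<in>PiE (insert a S) (\<lambda>_. Z). H \<zeta>)
      = (\<Sum>\<zeta>\<in>(\<lambda>(y, g). g(a := y)) ` (Z \<times> PiE S (\<lambda>_. Z)). H \<zeta>)"
    by (simp add: PiE_insert_eq)
  also have "\<dots> = (\<Sum>yg\<in>Z \<times> PiE S (\<lambda>_. Z). (H \<circ> (\<lambda>(y, g). g(a := y))) yg)"
    by (rule sum.reindex) (use inj_combinator[OF assms(1), of "\<lambda>_. Z"] in simp)
  also have "\<dots> = (\<Sum>(y, g)\<in>Z \<times> PiE S (\<lambda>_. Z). H g)"
    by (intro sum.cong) (auto simp: assms(2))
  also have "\<dots> = real (card Z) * (\<Sum>g\<in>PiE S (\<lambda>_. Z). H g)"
    by (simp add: sum.cartesian_product[symmetric])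
  finally show ?thesis .
qed

lemma exp_minus_one_le: "0 \<le> (s::real) \<Longrightarrow> exp s - 1 \<le> s * exp s"
proof -
  assume s: "0 \<le> s"
  have "exp s * (1 - s) \<le> exp s * exp (-s)"
    using exp_ge_add_one_self[of "-s"] by (intro mult_left_mono) auto
  also have "\<dots> = 1" by (simp add: exp_minus)
  finally show ?thesis by (simp add: algebra_simps)
qed

lemma abs_diff_le_of_mutual_ratio:
  fixes X Y s K :: real
  assumes "X \<le> exp s * Y" "Y \<le> exp s * X" "0 \<le> s" "X \<le> K" "Y \<le> K"
  shows "\<bar>X - Y\<bar> \<le> (exp s - 1) * K"
proof -
  have e: "0 \<le> exp s - 1" using assms(3) by simp
  have "X - Y \<le> (exp s - 1) * K"
    using assms(1) mult_left_mono[OF assms(5) e] by (simp add: algebra_simps)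
  moreover have "Y - X \<le> (exp s - 1) * K"
    using assms(2) mult_left_mono[OF assms(4) e] by (simp add: algebra_simps)
  ultimately show ?thesis by (simp add: abs_le_iff)
qed

lemma convergent_of_geometric_increments:
  fixes u :: "nat \<Rightarrow> real"
  assumes "\<And>k. \<bar>u (Suc k) - u k\<bar> \<le> C * q ^ k" "0 \<le> q" "q < 1"
  shows "convergent u"
proof -
  have "summable (\<lambda>k. C * q ^ k)" using assms(2,3) by (intro summable_mult summable_geometric) simp
  hence "summable (\<lambda>k. u (Suc k) - u k)"
    by (rule summable_comparison_test[rotated]) (use assms(1) in auto)
  hence "(\<lambda>n. u n - u 0) \<longlonglongrightarrow> (\<Sum>k. u (Suc k) - u k)"
    using summable_LIMSEQ by (fastforce simp: sum_lessThan_telescope)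
  hence "(\<lambda>n. (u n - u 0) + u 0) \<longlonglongrightarrow> (\<Sum>k. u (Suc k) - u k) + u 0" by (intro tendsto_add) auto
  thus ?thesis unfolding convergent_def by auto
qed

lemma eq_zero_of_abs_le_geometric:
  fixes z C q :: real
  assumes "\<And>n. \<bar>z\<bar> \<le> C * q ^ n" "0 \<le> q" "q < 1"
  shows "z = 0"
proof -
  have "(\<lambda>n. C * q ^ n) \<longlonglongrightarrow> C * 0" by (intro tendsto_mult_left LIMSEQ_power_zero) (use assms in auto)
  hence "\<bar>z\<bar> \<le> 0" by (intro LIMSEQ_le_const[of "\<lambda>n. C * q ^ n"]) (use assms(1) in auto)
  thus ?thesis by simp
qed

lemma power_powr_swap: "0 \<le> (x::real) \<Longrightarrow> (x ^ n) powr b = (x powr b) ^ n"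
  by (induction n) (auto simp: powr_mult)

locale rpf_setting =
  fixes dI :: "real \<Rightarrow> real \<Rightarrow> real"
    and \<theta> \<eta> \<beta> lam p :: real
    and Z :: "(real \<Rightarrow> real) set"
    and f :: "(int \<Rightarrow> real) \<Rightarrow> real"
    and \<nu>0 :: "(int \<Rightarrow> real) measure"
  assumes metric: "is_metric_on Icar dI"
    and dI_bdd: "\<exists>M. \<forall>s\<in>Icar. \<forall>t\<in>Icar. dI s t \<le> M"
    and theta: "0 < \<theta>" "\<theta> < 1"
    and beta: "0 < \<beta>" "\<beta> \<le> 1"
    and eta: "0 < \<eta>" "\<eta> < 1"
    and Z_fin: "finite Z"
    and Z_ne: "Z \<noteq> {}"
    and Z_maps: "\<forall>\<zeta>\<in>Z. \<forall>t\<in>Icar. \<zeta> t \<in> Icar"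
    and Z_contr: "\<forall>\<zeta>\<in>Z. \<forall>s\<in>Icar. \<forall>t\<in>Icar. dI (\<zeta> s) (\<zeta> t) \<le> \<eta> * dI s t"
    and p_Icar: "p \<in> Icar"
    and f_C: "in_C dI \<theta> p \<beta> f"
    and nu_prob: "prob_space \<nu>0"
    and nu_space: "space \<nu>0 = Omega"
    and nu_sets: "sets \<nu>0 = sigma_sets Omega {U. d_open dI \<theta> U}"
    and lambda_def: "lam = integral\<^sup>L \<nu>0 (Ptr Z p f (\<lambda>_. 1))"
    and nu_eigen: "\<forall>\<Phi>. in_C dI \<theta> p \<beta> \<Phi> \<longrightarrow>
                     integrable \<nu>0 (Ptr Z p f \<Phi>) \<and>
                     integral\<^sup>L \<nu>0 (Ptr Z p f \<Phi>) = lam * integral\<^sup>L \<nu>0 \<Phi>"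
begin

section \<open>The metric on the shift space\<close>

abbreviation d :: "(int \<Rightarrow> real) \<Rightarrow> (int \<Rightarrow> real) \<Rightarrow> real" where
  "d \<equiv> dOm dI \<theta>"

lemma dI_props:
  "s \<in> Icar \<Longrightarrow> t \<in> Icar \<Longrightarrow> 0 \<le> dI s t \<and> (dI s t = 0 \<longleftrightarrow> s = t) \<and> dI s t = dI t s"
  using metric unfolding is_metric_on_def by blast

lemma dI_nonneg: "s \<in> Icar \<Longrightarrow> t \<in> Icar \<Longrightarrow> 0 \<le> dI s t"
  and dI_self: "s \<in> Icar \<Longrightarrow> dI s s = 0"
  and dI_sym: "s \<in> Icar \<Longrightarrow> t \<in> Icar \<Longrightarrow> dI s t = dI t s"
  using dI_props by blast+

definition diam :: real where
  "diam = (SOME M. \<forall>s\<in>Icar. \<forall>t\<in>Icar. dI s t \<le> M)"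

lemma dI_le_diam: "s \<in> Icar \<Longrightarrow> t \<in> Icar \<Longrightarrow> dI s t \<le> diam"
  using someI_ex[OF dI_bdd] unfolding diam_def by blast

lemma diam_nonneg: "0 \<le> diam"
  using dI_le_diam[OF p_Icar p_Icar] dI_nonneg[OF p_Icar p_Icar] by linarith

lemma Omega_Icar: "x \<in> Omega \<Longrightarrow> x i \<in> Icar"
  by (simp add: Omega_def)

definition coord_dist :: "(int \<Rightarrow> real) \<Rightarrow> (int \<Rightarrow> real) \<Rightarrow> int \<Rightarrow> real" where
  "coord_dist x y k = \<theta> ^ nat \<bar>k\<bar> * dI (x k) (y k)"

lemma d_eq_SUP: "d x y = (SUP k. coord_dist x y k)"
  unfolding dOm_def coord_dist_def ..

lemma theta_power: "0 < \<theta> ^ n" "\<theta> ^ n \<le> 1"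
  using theta by (auto intro: power_le_one)

lemma coord_dist_nonneg: "x \<in> Omega \<Longrightarrow> y \<in> Omega \<Longrightarrow> 0 \<le> coord_dist x y k"
  unfolding coord_dist_def using theta_power[of "nat \<bar>k\<bar>"] dI_nonneg Omega_Icar by simp

lemma coord_dist_le_diam:
  assumes "x \<in> Omega" "y \<in> Omega"
  shows "coord_dist x y k \<le> diam"
proof -
  have "coord_dist x y k \<le> 1 * dI (x k) (y k)" unfolding coord_dist_def
    by (rule mult_right_mono) (use theta_power dI_nonneg Omega_Icar assms in auto)
  also have "\<dots> \<le> diam" using dI_le_diam Omega_Icar assms by simp
  finally show ?thesis .
qed

lemma coord_dist_le_d: "x \<in> Omega \<Longrightarrow> y \<in> Omega \<Longrightarrow> coord_dist x y k \<le> d x y"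
  unfolding d_eq_SUP
  by (rule cSUP_upper) (auto intro!: bdd_aboveI coord_dist_le_diam)

lemma d_le: "(\<And>k. coord_dist x y k \<le> c) \<Longrightarrow> d x y \<le> c"
  unfolding d_eq_SUP by (rule cSUP_least) auto

lemma d_nonneg: "x \<in> Omega \<Longrightarrow> y \<in> Omega \<Longrightarrow> 0 \<le> d x y"
  using coord_dist_le_d coord_dist_nonneg by (meson order.trans)

lemma d_le_diam: "x \<in> Omega \<Longrightarrow> y \<in> Omega \<Longrightarrow> d x y \<le> diam"
  by (rule d_le) (rule coord_dist_le_diam)

lemma d_sym: "x \<in> Omega \<Longrightarrow> y \<in> Omega \<Longrightarrow> d x y = d y x"
  unfolding d_eq_SUP coord_dist_def using dI_sym Omega_Icar by simp

lemma d_pos: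
  assumes "x \<in> Omega" "y \<in> Omega" "x \<noteq> y"
  shows "0 < d x y"
proof -
  obtain i where i: "x i \<noteq> y i" using assms(3) by blast
  have "0 < dI (x i) (y i)"
    using dI_props[OF Omega_Icar[OF assms(1)] Omega_Icar[OF assms(2)]] i by (metis order_le_less)
  hence "0 < coord_dist x y i" unfolding coord_dist_def using theta_power by simp
  thus ?thesis using coord_dist_le_d[OF assms(1,2)] by (meson less_le_trans)
qed

lemma d_le_scaled:
  assumes "\<And>k. coord_dist x y k \<le> c * coord_dist x' y' k" "0 \<le> c" "x' \<in> Omega" "y' \<in> Omega"
  shows "d x y \<le> c * d x' y'"
  using assms order_trans mult_left_mono[OF coord_dist_le_d[OF assms(3,4)] assms(2)]
  by (metis d_le)

definition diam_pow :: real where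
  "diam_pow = diam powr \<beta>"

lemma diam_pow_nonneg: "0 \<le> diam_pow"
  unfolding diam_pow_def by simp

lemma d_powr_le_diam_pow: "x \<in> Omega \<Longrightarrow> y \<in> Omega \<Longrightarrow> d x y powr \<beta> \<le> diam_pow"
  unfolding diam_pow_def using d_le_diam d_nonneg beta by (auto intro: powr_mono2)

section \<open>Inverse branches and the approximating operators\<close>

definition branch_point :: "nat \<Rightarrow> (int \<Rightarrow> real \<Rightarrow> real) \<Rightarrow> (int \<Rightarrow> real) \<Rightarrow> (int \<Rightarrow> real)" where
  "branch_point k \<zeta> x = piK p k (apply_branch k \<zeta> x)"

lemma branch_point_eq: "branch_point k \<zeta> x = (\<lambda>i. if \<bar>i\<bar> \<le> int k then \<zeta> i (x i) else p)"
  unfolding branch_point_def piK_def apply_branch_def by auto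

lemma branches_mem: "\<zeta> \<in> branches Z k \<Longrightarrow> \<bar>i\<bar> \<le> int k \<Longrightarrow> \<zeta> i \<in> Z"
  unfolding branches_def by (auto simp: PiE_def Pi_def abs_le_iff)

lemma branch_point_Omega:
  assumes "\<zeta> \<in> branches Z m" "k \<le> m" "x \<in> Omega"
  shows "branch_point k \<zeta> x \<in> Omega"
  unfolding Omega_def branch_point_eq
  using branches_mem[OF assms(1)] assms(2) Z_maps Omega_Icar[OF assms(3)] p_Icar by auto

lemma piK_Omega: "x \<in> Omega \<Longrightarrow> piK p k x \<in> Omega"
  unfolding Omega_def piK_def using p_Icar by auto

lemma piK_branch_point: "k \<le> m \<Longrightarrow> piK p m (branch_point k \<zeta> x) = branch_point k \<zeta> x"
  unfolding branch_point_eq piK_def by (auto simp: fun_eq_iff)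

lemma d_branch_point_contract:
  assumes "\<zeta> \<in> branches Z k" "x \<in> Omega" "y \<in> Omega"
  shows "d (branch_point k \<zeta> x) (branch_point k \<zeta> y) \<le> \<eta> * d x y"
proof (rule d_le_scaled[OF _ _ assms(2,3)])
  fix i
  show "coord_dist (branch_point k \<zeta> x) (branch_point k \<zeta> y) i \<le> \<eta> * coord_dist x y i"
  proof (cases "\<bar>i\<bar> \<le> int k")
    case True
    have "dI (\<zeta> i (x i)) (\<zeta> i (y i)) \<le> \<eta> * dI (x i) (y i)"
      using Z_contr branches_mem[OF assms(1) True] Omega_Icar assms(2,3) by blast
    hence "\<theta> ^ nat \<bar>i\<bar> * dI (\<zeta> i (x i)) (\<zeta> i (y i)) \<le> \<theta> ^ nat \<bar>i\<bar> * (\<eta> * dI (x i) (y i))"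
      using theta_power(1)[of "nat \<bar>i\<bar>"] by (intro mult_left_mono) auto
    thus ?thesis using True unfolding coord_dist_def branch_point_eq by (simp add: algebra_simps)
  next
    case False
    thus ?thesis
      using dI_self[OF p_Icar] eta coord_dist_nonneg[OF assms(2,3), of i]
      unfolding branch_point_eq coord_dist_def by simp
  qed
qed (use eta in auto)

lemma d_piK_le:
  assumes "x \<in> Omega" "y \<in> Omega"
  shows "d (piK p k x) (piK p k y) \<le> d x y"
  using d_le_scaled[OF _ _ assms, of "piK p k x" "piK p k y" 1] coord_dist_nonneg[OF assms]
  unfolding piK_def coord_dist_def by (simp add: dI_self[OF p_Icar])

text \<open>Refining a branch from order \<open>k\<close> to \<open>k + 1\<close> only changes the two coordinates
  \<open>\<plusminus>(k + 1)\<close>, whose weight in \<open>d\<close> is \<open>\<theta>\<^bsup>k+1\<^esup>\<close>.\<close>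

lemma d_branch_point_Suc:
  assumes "\<zeta> \<in> branches Z (Suc k)" "x \<in> Omega"
  shows "d (branch_point (Suc k) \<zeta> x) (branch_point k \<zeta> x) \<le> \<theta> ^ Suc k * diam"
proof (rule d_le)
  fix i
  show "coord_dist (branch_point (Suc k) \<zeta> x) (branch_point k \<zeta> x) i \<le> \<theta> ^ Suc k * diam"
  proof (cases "\<bar>i\<bar> = int (Suc k)")
    case True
    have "\<zeta> i (x i) \<in> Icar"
      using Z_maps branches_mem[OF assms(1)] True Omega_Icar[OF assms(2)] by simp
    hence "dI (\<zeta> i (x i)) p \<le> diam" using dI_le_diam p_Icar by blast
    moreover have "nat \<bar>i\<bar> = Suc k" using True by simp
    ultimately show ?thesis unfolding coord_dist_def branch_point_eq using True theta_power[of "Suc k"]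
      by (auto intro: mult_left_mono)
  next
    case False
    have "\<zeta> i (x i) \<in> Icar" if "\<bar>i\<bar> \<le> int k"
      using Z_maps branches_mem[OF assms(1)] that Omega_Icar[OF assms(2)] by simp
    thus ?thesis unfolding coord_dist_def branch_point_eq
      using False dI_self p_Icar theta_power[of "Suc k"] diam_nonneg by auto
  qed
qed

definition f_semi :: real where
  "f_semi = holder_semi dI \<theta> p \<beta> f"

definition f_sup :: real where
  "f_sup = Sup {\<bar>f x\<bar> | x. x \<in> Omega}"

lemma f_abs_le_f_sup: "x \<in> Omega \<Longrightarrow> \<bar>f x\<bar> \<le> f_sup"
  unfolding f_sup_def by (rule cSup_upper) (use f_C in_C_def in auto)

lemma holder_quots_f_bdd: "bdd_above (holder_quots dI \<theta> p \<beta> f)"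
  using f_C unfolding in_C_def by (elim conjE)

lemma holder_quots_memI:
  "x \<in> Omega \<Longrightarrow> y \<in> Omega \<Longrightarrow> x \<noteq> y \<Longrightarrow>
    \<bar>f (piK p k x) - f (piK p k y)\<bar> / d x y powr \<beta> \<in> holder_quots dI \<theta> p \<beta> f"
  unfolding holder_quots_def by blast

lemma f_semi_nonneg: "0 \<le> f_semi"
proof -
  let ?x = "\<lambda>_::int. 0::real" and ?y = "\<lambda>_::int. 1/2::real"
  have xy: "?x \<in> Omega" "?y \<in> Omega" "?x \<noteq> ?y" by (auto simp: Omega_def Icar_def fun_eq_iff)
  have "0 \<le> \<bar>f (piK p 0 ?x) - f (piK p 0 ?y)\<bar> / d ?x ?y powr \<beta>" by simp
  also have "\<dots> \<le> f_semi" unfolding f_semi_def holder_semi_def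
    by (rule cSup_upper[OF holder_quots_memI[OF xy] holder_quots_f_bdd])
  finally show ?thesis .
qed

lemma f_holder_piK:
  assumes "u \<in> Omega" "v \<in> Omega"
  shows "\<bar>f (piK p k u) - f (piK p k v)\<bar> \<le> f_semi * d u v powr \<beta>"
proof (cases "u = v")
  case False
  have "\<bar>f (piK p k u) - f (piK p k v)\<bar> / d u v powr \<beta> \<le> f_semi"
    unfolding f_semi_def holder_semi_def
    by (rule cSup_upper[OF holder_quots_memI[OF assms False] holder_quots_f_bdd])
  thus ?thesis using d_pos[OF assms False] by (simp add: divide_le_eq)
qed (use f_semi_nonneg in simp)

lemma f_holder_branch_points:
  assumes "\<zeta> \<in> branches Z m" "k \<le> m" "l \<le> m" "x \<in> Omega" "y \<in> Omega"
  shows "\<bar>f (branch_point k \<zeta> x) - f (branch_point l \<zeta> y)\<bar>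
           \<le> f_semi * d (branch_point k \<zeta> x) (branch_point l \<zeta> y) powr \<beta>"
  using f_holder_piK[OF branch_point_Omega[OF assms(1,2,4)] branch_point_Omega[OF assms(1,3,5)], of m]
  by (simp add: piK_branch_point assms(2,3))

lemma card_branches: "card (branches Z k) = card Z ^ (2 * k + 1)"
proof -
  have "card (branches Z k) = card Z ^ card {- int k..int k}"
    unfolding branches_def by (simp add: card_PiE)
  also have "card {- int k..int k} = 2 * k + 1" by simp
  finally show ?thesis .
qed

lemma finite_branches: "finite (branches Z k)"
  unfolding branches_def using Z_fin by (intro finite_PiE) auto

lemma branches_ne: "branches Z k \<noteq> {}"
  unfolding branches_def using Z_ne by (simp add: PiE_eq_empty_iff)

definition weighted :: "((int \<Rightarrow> real) \<Rightarrow> real) \<Rightarrow> (int \<Rightarrow> real) \<Rightarrow> real" where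
  "weighted \<Phi> z = exp (f z) * \<Phi> z"

lemma Pk_eq_average:
  "Pk Z p f k \<Phi> x
     = (\<Sum>\<zeta>\<in>branches Z k. weighted \<Phi> (branch_point k \<zeta> x)) / real (card (branches Z k))"
  unfolding Pk_def card_branches weighted_def branch_point_def by simp

text \<open>Summing over branches of order \<open>k + 1\<close> a quantity that only sees the coordinates
  \<open>|i| \<le> k\<close> counts every branch of order \<open>k\<close> exactly \<open>(card Z)\<^sup>2\<close> times.\<close>

lemma Pk_eq_average_Suc:
  "Pk Z p f k \<Phi> x
     = (\<Sum>\<zeta>\<in>branches Z (Suc k). weighted \<Phi> (branch_point k \<zeta> x)) / real (card (branches Z (Suc k)))"
proof -
  let ?H = "\<lambda>\<zeta>. weighted \<Phi> (branch_point k \<zeta> x)"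
  have upd: "?H (g(j := y)) = ?H g" if "int k < \<bar>j\<bar>" for g j y
    using that unfolding branch_point_eq by (auto intro!: arg_cong[of _ _ "weighted \<Phi>"])
  have "{- int (Suc k)..int (Suc k)} = insert (int (Suc k)) (insert (- int (Suc k)) {- int k..int k})"
    by auto
  hence "(\<Sum>\<zeta>\<in>branches Z (Suc k). ?H \<zeta>) = real (card Z) * (real (card Z) * (\<Sum>\<zeta>\<in>branches Z k. ?H \<zeta>))"
    unfolding branches_def by (simp add: sum_PiE_insert_const upd)
  moreover have "real (card (branches Z (Suc k))) = real (card Z) * (real (card Z) * real (card (branches Z k)))"
    unfolding card_branches by (simp add: algebra_simps power_add power2_eq_square)
  moreover have "0 < card Z" using Z_ne Z_fin by (simp add: card_gt_0_iff)
  ultimately show ?thesis unfolding Pk_eq_average by simp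
qed

lemma Pk_linear:
  "Pk Z p f k (\<lambda>z. \<alpha> * \<Phi> z + \<gamma> * \<Psi> z) x = \<alpha> * Pk Z p f k \<Phi> x + \<gamma> * Pk Z p f k \<Psi> x"
  unfolding Pk_eq_average weighted_def
  by (simp add: sum.distrib sum_distrib_left algebra_simps add_divide_distrib)

lemma Pk_cong:
  "x \<in> Omega \<Longrightarrow> (\<And>z. z \<in> Omega \<Longrightarrow> \<Phi> z = \<Psi> z) \<Longrightarrow> Pk Z p f k \<Phi> x = Pk Z p f k \<Psi> x"
  unfolding Pk_eq_average weighted_def using branch_point_Omega
  by (intro arg_cong2[where f="(/)"] sum.cong) auto

lemma Pk_nonneg: "x \<in> Omega \<Longrightarrow> (\<And>z. z \<in> Omega \<Longrightarrow> 0 \<le> \<Phi> z) \<Longrightarrow> 0 \<le> Pk Z p f k \<Phi> x"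
  unfolding Pk_eq_average weighted_def using branch_point_Omega
  by (intro divide_nonneg_nonneg sum_nonneg) auto

lemma Pk_abs_diff_le:
  assumes "x \<in> Omega" "\<And>z. z \<in> Omega \<Longrightarrow> \<bar>\<Phi> z - \<Psi> z\<bar> \<le> D"
  shows "\<bar>Pk Z p f k \<Phi> x - Pk Z p f k \<Psi> x\<bar> \<le> exp f_sup * D"
proof -
  have "Pk Z p f k \<Phi> x - Pk Z p f k \<Psi> x = Pk Z p f k (\<lambda>z. 1 * \<Phi> z + (-1) * \<Psi> z) x"
    by (simp only: Pk_linear)
  also have "\<bar>\<dots>\<bar> \<le> exp f_sup * D" unfolding Pk_eq_average
  proof (rule abs_sum_div_card_le[OF finite_branches branches_ne])
    fix \<zeta> assume "\<zeta> \<in> branches Z k"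
    hence z: "branch_point k \<zeta> x \<in> Omega" using branch_point_Omega assms(1) by blast
    show "\<bar>weighted (\<lambda>z. 1 * \<Phi> z + -1 * \<Psi> z) (branch_point k \<zeta> x)\<bar> \<le> exp f_sup * D"
      unfolding weighted_def abs_mult
      using f_abs_le_f_sup[OF z] assms(2)[OF z] by (intro mult_mono) auto
  qed
  finally show ?thesis .
qed

lemma Pk_ge:
  assumes "x \<in> Omega" "0 \<le> m" "\<And>z. z \<in> Omega \<Longrightarrow> m \<le> \<Phi> z"
  shows "exp (- f_sup) * m \<le> Pk Z p f k \<Phi> x"
  unfolding Pk_eq_average
proof (rule sum_div_card_ge[OF finite_branches branches_ne])
  fix \<zeta> assume "\<zeta> \<in> branches Z k"
  hence z: "branch_point k \<zeta> x \<in> Omega" using branch_point_Omega assms(1) by blast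
  show "exp (- f_sup) * m \<le> weighted \<Phi> (branch_point k \<zeta> x)" unfolding weighted_def
    using f_abs_le_f_sup[OF z] assms(3)[OF z] assms(2) by (intro mult_mono) auto
qed

section \<open>Cones of log-Hoelder functions\<close>

definition Lcone :: "real \<Rightarrow> ((int \<Rightarrow> real) \<Rightarrow> real) set" where
  "Lcone c = {\<Phi>. \<forall>x\<in>Omega. 0 \<le> \<Phi> x \<and> (\<forall>y\<in>Omega. \<Phi> x \<le> exp (c * d x y powr \<beta>) * \<Phi> y)}"

lemma LconeD: "\<Phi> \<in> Lcone c \<Longrightarrow> x \<in> Omega \<Longrightarrow> y \<in> Omega \<Longrightarrow> \<Phi> x \<le> exp (c * d x y powr \<beta>) * \<Phi> y"
  and Lcone_nonneg: "\<Phi> \<in> Lcone c \<Longrightarrow> x \<in> Omega \<Longrightarrow> 0 \<le> \<Phi> x"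
  unfolding Lcone_def by auto

lemma Lcone_mono:
  assumes "c \<le> c'"
  shows "Lcone c \<subseteq> Lcone c'"
proof
  fix \<Phi> assume \<Phi>: "\<Phi> \<in> Lcone c"
  show "\<Phi> \<in> Lcone c'" unfolding Lcone_def
  proof (intro CollectI ballI conjI)
    fix x y assume x: "x \<in> Omega" and y: "y \<in> Omega"
    have "\<Phi> x \<le> exp (c * d x y powr \<beta>) * \<Phi> y" by (rule LconeD[OF \<Phi> x y])
    also have "\<dots> \<le> exp (c' * d x y powr \<beta>) * \<Phi> y"
      using Lcone_nonneg[OF \<Phi> y] assms by (intro mult_right_mono) (auto intro: mult_right_mono)
    finally show "\<Phi> x \<le> exp (c' * d x y powr \<beta>) * \<Phi> y" .
  qed (rule Lcone_nonneg[OF \<Phi>])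
qed

lemma Lcone_cong: "\<Phi> \<in> Lcone c \<Longrightarrow> (\<And>z. z \<in> Omega \<Longrightarrow> \<Psi> z = \<Phi> z) \<Longrightarrow> \<Psi> \<in> Lcone c"
  unfolding Lcone_def by auto

lemma Lcone_scale: "0 \<le> \<alpha> \<Longrightarrow> \<Phi> \<in> Lcone c \<Longrightarrow> (\<lambda>z. \<alpha> * \<Phi> z) \<in> Lcone c"
  unfolding Lcone_def by (auto simp: mult.left_commute intro: mult_left_mono)

lemma const_one_Lcone: "(\<lambda>_. 1) \<in> Lcone 0"
  unfolding Lcone_def by simp

lemma Lcone_le_exp_diam:
  assumes "\<Phi> \<in> Lcone c" "0 \<le> c" "x \<in> Omega" "y \<in> Omega"
  shows "\<Phi> x \<le> exp (c * diam_pow) * \<Phi> y"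
proof -
  have "\<Phi> x \<le> exp (c * d x y powr \<beta>) * \<Phi> y" by (rule LconeD[OF assms(1,3,4)])
  also have "\<dots> \<le> exp (c * diam_pow) * \<Phi> y"
    using d_powr_le_diam_pow[OF assms(3,4)] assms(2) Lcone_nonneg[OF assms(1,4)]
    by (intro mult_right_mono) (auto intro: mult_left_mono)
  finally show ?thesis .
qed

definition p_seq :: "int \<Rightarrow> real" where
  "p_seq = (\<lambda>_. p)"

lemma p_seq_Omega: "p_seq \<in> Omega"
  unfolding p_seq_def Omega_def using p_Icar by simp

definition sup_bound :: "((int \<Rightarrow> real) \<Rightarrow> real) \<Rightarrow> real \<Rightarrow> real" where
  "sup_bound \<Phi> c = exp (c * diam_pow) * \<Phi> p_seq"

lemma Lcone_le_sup_bound: "\<Phi> \<in> Lcone c \<Longrightarrow> 0 \<le> c \<Longrightarrow> x \<in> Omega \<Longrightarrow> \<Phi> x \<le> sup_bound \<Phi> c"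
  unfolding sup_bound_def using Lcone_le_exp_diam p_seq_Omega by blast

lemma sup_bound_nonneg: "\<Phi> \<in> Lcone c \<Longrightarrow> 0 \<le> sup_bound \<Phi> c"
  unfolding sup_bound_def using Lcone_nonneg[OF _ p_seq_Omega] by simp

lemma Lcone_holder:
  assumes "\<Phi> \<in> Lcone c" "0 \<le> c" "x \<in> Omega" "y \<in> Omega"
  shows "\<bar>\<Phi> x - \<Phi> y\<bar> \<le> c * exp (c * diam_pow) * sup_bound \<Phi> c * d x y powr \<beta>"
proof -
  define s where "s = c * d x y powr \<beta>"
  have s0: "0 \<le> s" and sT: "s \<le> c * diam_pow"
    unfolding s_def using assms(2) d_powr_le_diam_pow[OF assms(3,4)] by (auto intro: mult_left_mono)
  have "\<bar>\<Phi> x - \<Phi> y\<bar> \<le> (exp s - 1) * sup_bound \<Phi> c"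
  proof (rule abs_diff_le_of_mutual_ratio[OF _ _ s0])
    show "\<Phi> x \<le> exp s * \<Phi> y" unfolding s_def by (rule LconeD[OF assms(1,3,4)])
    show "\<Phi> y \<le> exp s * \<Phi> x" unfolding s_def using LconeD[OF assms(1,4,3)] d_sym[OF assms(3,4)] by simp
  qed (use Lcone_le_sup_bound[OF assms(1,2)] assms(3,4) in auto)
  also have "\<dots> \<le> (s * exp (c * diam_pow)) * sup_bound \<Phi> c"
  proof (rule mult_right_mono[OF _ sup_bound_nonneg[OF assms(1)]])
    have "exp s - 1 \<le> s * exp s" by (rule exp_minus_one_le[OF s0])
    also have "\<dots> \<le> s * exp (c * diam_pow)" using sT s0 by (intro mult_left_mono) auto
    finally show "exp s - 1 \<le> s * exp (c * diam_pow)" .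
  qed
  finally show ?thesis unfolding s_def by (simp add: algebra_simps)
qed

lemma Lcone_d_continuous:
  assumes "\<Phi> \<in> Lcone c" "0 \<le> c"
  shows "d_continuous dI \<theta> \<Phi>"
  unfolding d_continuous_def
proof (intro ballI allI impI)
  fix x e assume x: "x \<in> Omega" and e: "(0::real) < e"
  define L where "L = c * exp (c * diam_pow) * sup_bound \<Phi> c"
  have L0: "0 \<le> L" unfolding L_def using assms sup_bound_nonneg by simp
  define \<delta> where "\<delta> = (e / (L + 1)) powr (1 / \<beta>)"
  have \<delta>: "0 < \<delta>" unfolding \<delta>_def using e L0 by simp
  show "\<exists>\<delta>>0. \<forall>y\<in>Omega. d x y < \<delta> \<longrightarrow> \<bar>\<Phi> y - \<Phi> x\<bar> < e"
  proof (intro exI[of _ \<delta>] conjI \<delta> ballI impI)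
    fix y assume y: "y \<in> Omega" and dxy: "d x y < \<delta>"
    have "d x y powr \<beta> < \<delta> powr \<beta>"
      using dxy d_nonneg[OF x y] beta by (intro powr_less_mono2) auto
    also have "\<delta> powr \<beta> = e / (L + 1)" unfolding \<delta>_def using beta e L0 by (simp add: powr_powr)
    finally have db: "d x y powr \<beta> < e / (L + 1)" .
    have "\<bar>\<Phi> y - \<Phi> x\<bar> \<le> L * d x y powr \<beta>"
      unfolding L_def using Lcone_holder[OF assms x y] by (simp add: abs_minus_commute)
    also have "\<dots> \<le> L * (e / (L + 1))" using db L0 by (intro mult_left_mono) auto
    also have "\<dots> < e" using L0 e by (simp add: field_simps)
    finally show "\<bar>\<Phi> y - \<Phi> x\<bar> < e" .
  qed
qed

lemma Lcone_in_C:
  assumes "\<Phi> \<in> Lcone c" "0 \<le> c"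
  shows "in_C dI \<theta> p \<beta> \<Phi>"
  unfolding in_C_def
proof (intro conjI)
  show "d_continuous dI \<theta> \<Phi>" by (rule Lcone_d_continuous[OF assms])
  show "bdd_above {\<bar>\<Phi> x\<bar> |x. x \<in> Omega}"
    using Lcone_le_sup_bound[OF assms] Lcone_nonneg[OF assms(1)] by (auto intro!: bdd_aboveI)
  define L where "L = c * exp (c * diam_pow) * sup_bound \<Phi> c"
  have L0: "0 \<le> L" unfolding L_def using assms sup_bound_nonneg by simp
  show "bdd_above (holder_quots dI \<theta> p \<beta> \<Phi>)"
  proof (rule bdd_aboveI[of _ L])
    fix q assume "q \<in> holder_quots dI \<theta> p \<beta> \<Phi>"
    then obtain k x y where q: "q = \<bar>\<Phi> (piK p k x) - \<Phi> (piK p k y)\<bar> / d x y powr \<beta>"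
      and xy: "x \<in> Omega" "y \<in> Omega" "x \<noteq> y"
      unfolding holder_quots_def by blast
    have "\<bar>\<Phi> (piK p k x) - \<Phi> (piK p k y)\<bar> \<le> L * d (piK p k x) (piK p k y) powr \<beta>"
      unfolding L_def using Lcone_holder[OF assms piK_Omega piK_Omega] xy by simp
    also have "\<dots> \<le> L * d x y powr \<beta>"
      using L0 d_piK_le[OF xy(1,2)] d_nonneg piK_Omega xy beta by (intro mult_left_mono powr_mono2) auto
    finally show "q \<le> L" unfolding q using d_pos[OF xy] by (simp add: divide_le_eq)
  qed
qed

lemma d_continuous_measurable:
  fixes \<Phi> :: "(int \<Rightarrow> real) \<Rightarrow> real"
  assumes "d_continuous dI \<theta> \<Phi>"
  shows "\<Phi> \<in> borel_measurable \<nu>0"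
proof (rule borel_measurableI)
  fix U :: "real set" assume U: "open U"
  have "d_open dI \<theta> (\<Phi> -` U \<inter> Omega)" unfolding d_open_def
  proof (intro conjI ballI)
    fix x assume "x \<in> \<Phi> -` U \<inter> Omega"
    hence x: "x \<in> Omega" "\<Phi> x \<in> U" by auto
    obtain e where e: "e > 0" "\<And>t. dist t (\<Phi> x) < e \<Longrightarrow> t \<in> U"
      using U x(2) unfolding open_dist by blast
    obtain \<delta> where "\<delta> > 0" "\<forall>y\<in>Omega. d x y < \<delta> \<longrightarrow> \<bar>\<Phi> y - \<Phi> x\<bar> < e"
      using assms x(1) e(1) unfolding d_continuous_def by blast
    thus "\<exists>e>0. \<forall>y\<in>Omega. d x y < e \<longrightarrow> y \<in> \<Phi> -` U \<inter> Omega"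
      using e(2) by (auto simp: dist_real_def)
  qed auto
  hence "\<Phi> -` U \<inter> Omega \<in> sigma_sets Omega {U. d_open dI \<theta> U}" by (intro sigma_sets.Basic) auto
  thus "\<Phi> -` U \<inter> space \<nu>0 \<in> sets \<nu>0" using nu_space nu_sets by simp
qed

lemma Lcone_integrable:
  assumes "\<Phi> \<in> Lcone c" "0 \<le> c"
  shows "integrable \<nu>0 \<Phi>"
proof (rule finite_measure.integrable_const_bound[where B = "sup_bound \<Phi> c"])
  show "finite_measure \<nu>0" using nu_prob by (simp add: prob_space_def)
  show "AE x in \<nu>0. norm (\<Phi> x) \<le> sup_bound \<Phi> c"
    using Lcone_le_sup_bound[OF assms] Lcone_nonneg[OF assms(1)] nu_space by (auto intro!: AE_I2)
qed (rule d_continuous_measurable[OF Lcone_d_continuous[OF assms]])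

lemma integral_ge_const:
  fixes \<Phi> :: "(int \<Rightarrow> real) \<Rightarrow> real"
  shows "integrable \<nu>0 \<Phi> \<Longrightarrow> (\<And>x. x \<in> Omega \<Longrightarrow> c \<le> \<Phi> x) \<Longrightarrow> c \<le> integral\<^sup>L \<nu>0 \<Phi>"
  using prob_space.integral_ge_const[OF nu_prob, of \<Phi> c] nu_space by (auto intro: AE_I2)

lemma integral_le_const:
  fixes \<Phi> :: "(int \<Rightarrow> real) \<Rightarrow> real"
  shows "integrable \<nu>0 \<Phi> \<Longrightarrow> (\<And>x. x \<in> Omega \<Longrightarrow> \<Phi> x \<le> c) \<Longrightarrow> integral\<^sup>L \<nu>0 \<Phi> \<le> c"
  using prob_space.integral_le_const[OF nu_prob, of \<Phi> c] nu_space by (auto intro: AE_I2)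

lemma integral_cong_Omega:
  fixes \<Phi> \<Psi> :: "(int \<Rightarrow> real) \<Rightarrow> real"
  shows "(\<And>x. x \<in> Omega \<Longrightarrow> \<Phi> x = \<Psi> x) \<Longrightarrow> integral\<^sup>L \<nu>0 \<Phi> = integral\<^sup>L \<nu>0 \<Psi>"
  by (rule Bochner_Integration.integral_cong) (use nu_space in auto)

lemma Lcone_normalized_le:
  assumes "\<Phi> \<in> Lcone c" "0 \<le> c" "integral\<^sup>L \<nu>0 \<Phi> = 1" "x \<in> Omega"
  shows "\<Phi> x \<le> exp (c * diam_pow)"
proof -
  have "\<Phi> x / exp (c * diam_pow) \<le> integral\<^sup>L \<nu>0 \<Phi>"
    by (rule integral_ge_const[OF Lcone_integrable[OF assms(1,2)]])
       (use Lcone_le_exp_diam[OF assms(1,2,4)] in \<open>simp add: divide_le_eq mult.commute\<close>)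
  thus ?thesis using assms(3) by (simp add: divide_le_eq)
qed

lemma Lcone_normalized_ge:
  assumes "\<Phi> \<in> Lcone c" "0 \<le> c" "integral\<^sup>L \<nu>0 \<Phi> = 1" "x \<in> Omega"
  shows "exp (- c * diam_pow) \<le> \<Phi> x"
proof -
  have "1 \<le> exp (c * diam_pow) * \<Phi> x"
    using integral_le_const[OF Lcone_integrable[OF assms(1,2)] Lcone_le_exp_diam[OF assms(1,2) _ assms(4)]]
    by (simp add: assms(3))
  thus ?thesis by (simp add: exp_minus field_simps)
qed

section \<open>The transfer operator on the cones\<close>

definition r :: real where
  "r = \<eta> powr \<beta>"

lemma r_pos: "0 < r" and r_less_1: "r < 1"
  unfolding r_def using eta beta powr_less_mono2[of \<beta> \<eta> 1] by auto

lemma weighted_le: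
  assumes "\<Phi> \<in> Lcone c" "0 \<le> c" "u \<in> Omega" "v \<in> Omega"
    and "d u v powr \<beta> \<le> t" "f u - f v \<le> f_semi * t"
  shows "weighted \<Phi> u \<le> exp ((f_semi + c) * t) * weighted \<Phi> v"
proof -
  have "\<Phi> u \<le> exp (c * d u v powr \<beta>) * \<Phi> v" by (rule LconeD[OF assms(1,3,4)])
  also have "\<dots> \<le> exp (c * t) * \<Phi> v"
    using assms(2,5) Lcone_nonneg[OF assms(1,4)] by (intro mult_right_mono) (auto intro: mult_left_mono)
  finally have "exp (f u) * \<Phi> u \<le> exp (f v + f_semi * t) * (exp (c * t) * \<Phi> v)"
    using assms(6) Lcone_nonneg[OF assms(1,3)] by (intro mult_mono) auto
  thus ?thesis unfolding weighted_def by (simp add: exp_add algebra_simps)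
qed

lemma Pk_Lcone_le:
  assumes "\<Phi> \<in> Lcone c" "0 \<le> c" "x \<in> Omega" "y \<in> Omega"
  shows "Pk Z p f k \<Phi> x \<le> exp ((f_semi + c) * (r * d x y powr \<beta>)) * Pk Z p f k \<Phi> y"
proof -
  let ?t = "r * d x y powr \<beta>"
  have "weighted \<Phi> (branch_point k \<zeta> x) \<le> exp ((f_semi + c) * ?t) * weighted \<Phi> (branch_point k \<zeta> y)"
    if \<zeta>: "\<zeta> \<in> branches Z k" for \<zeta>
  proof (rule weighted_le[OF assms(1,2) branch_point_Omega[OF \<zeta> _ assms(3)] branch_point_Omega[OF \<zeta> _ assms(4)]])
    have "d (branch_point k \<zeta> x) (branch_point k \<zeta> y) powr \<beta> \<le> (\<eta> * d x y) powr \<beta>"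
      using d_branch_point_contract[OF \<zeta> assms(3,4)] d_nonneg branch_point_Omega[OF \<zeta>] assms(3,4) beta
      by (intro powr_mono2) auto
    also have "\<dots> = ?t" unfolding r_def using eta d_nonneg[OF assms(3,4)] by (simp add: powr_mult)
    finally show dt: "d (branch_point k \<zeta> x) (branch_point k \<zeta> y) powr \<beta> \<le> ?t" .
    have "\<bar>f (branch_point k \<zeta> x) - f (branch_point k \<zeta> y)\<bar>
        \<le> f_semi * d (branch_point k \<zeta> x) (branch_point k \<zeta> y) powr \<beta>"
      by (rule f_holder_branch_points[OF \<zeta> order_refl order_refl assms(3,4)])
    also have "\<dots> \<le> f_semi * ?t" by (rule mult_left_mono[OF dt f_semi_nonneg])
    finally show "f (branch_point k \<zeta> x) - f (branch_point k \<zeta> y) \<le> f_semi * ?t" by simp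
  qed simp_all
  hence "(\<Sum>\<zeta>\<in>branches Z k. weighted \<Phi> (branch_point k \<zeta> x))
      \<le> exp ((f_semi + c) * ?t) * (\<Sum>\<zeta>\<in>branches Z k. weighted \<Phi> (branch_point k \<zeta> y))"
    unfolding sum_distrib_left by (rule sum_mono)
  thus ?thesis unfolding Pk_eq_average by (simp add: divide_right_mono)
qed

definition q_theta :: real where
  "q_theta = \<theta> powr \<beta>"

lemma q_theta_nonneg: "0 \<le> q_theta" and q_theta_less_1: "q_theta < 1"
  unfolding q_theta_def using theta beta powr_less_mono2[of \<beta> \<theta> 1] by auto

lemma weighted_branch_point_Suc:
  assumes "\<Phi> \<in> Lcone c" "0 \<le> c" "x \<in> Omega" "\<zeta> \<in> branches Z (Suc k)"
  shows "\<bar>weighted \<Phi> (branch_point (Suc k) \<zeta> x) - weighted \<Phi> (branch_point k \<zeta> x)\<bar>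
           \<le> (exp ((f_semi + c) * (diam_pow * q_theta ^ Suc k)) - 1) * (exp f_sup * sup_bound \<Phi> c)"
proof -
  define u where "u = branch_point (Suc k) \<zeta> x"
  define v where "v = branch_point k \<zeta> x"
  define t where "t = diam_pow * q_theta ^ Suc k"
  have u: "u \<in> Omega" and v: "v \<in> Omega"
    unfolding u_def v_def using branch_point_Omega[OF assms(4) _ assms(3)] by auto
  have "d u v powr \<beta> \<le> (\<theta> ^ Suc k * diam) powr \<beta>"
    unfolding u_def v_def using d_branch_point_Suc[OF assms(4,3)] d_nonneg u v beta
    by (intro powr_mono2) (auto simp: u_def v_def)
  also have "\<dots> = t"
    unfolding t_def diam_pow_def q_theta_def using theta diam_nonneg by (simp add: powr_mult power_powr_swap)
  finally have duv: "d u v powr \<beta> \<le> t" .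
  hence dvu: "d v u powr \<beta> \<le> t" using d_sym[OF u v] by simp
  have "\<bar>f u - f v\<bar> \<le> f_semi * t"
    using f_holder_branch_points[OF assms(4) _ _ assms(3,3), of "Suc k" k] mult_left_mono[OF duv f_semi_nonneg]
    unfolding u_def v_def by simp
  hence fuv: "f u - f v \<le> f_semi * t" and fvu: "f v - f u \<le> f_semi * t" by auto
  have bound: "weighted \<Phi> z \<le> exp f_sup * sup_bound \<Phi> c" if "z \<in> Omega" for z
    unfolding weighted_def using f_abs_le_f_sup[OF that] Lcone_le_sup_bound[OF assms(1,2) that]
      Lcone_nonneg[OF assms(1) that] by (intro mult_mono) auto
  have "0 \<le> (f_semi + c) * t"
    unfolding t_def using f_semi_nonneg assms(2) diam_pow_nonneg q_theta_nonneg by simp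
  hence "\<bar>weighted \<Phi> u - weighted \<Phi> v\<bar> \<le> (exp ((f_semi + c) * t) - 1) * (exp f_sup * sup_bound \<Phi> c)"
    by (rule abs_diff_le_of_mutual_ratio[OF weighted_le[OF assms(1,2) u v duv fuv]
          weighted_le[OF assms(1,2) v u dvu fvu] _ bound[OF u] bound[OF v]])
  thus ?thesis unfolding u_def v_def t_def .
qed

lemma Pk_Suc_diff:
  assumes "\<Phi> \<in> Lcone c" "0 \<le> c" "x \<in> Omega"
  shows "\<bar>Pk Z p f (Suc k) \<Phi> x - Pk Z p f k \<Phi> x\<bar>
     \<le> ((f_semi + c) * diam_pow * exp ((f_semi + c) * diam_pow) * exp f_sup * sup_bound \<Phi> c * q_theta) * q_theta ^ k"
proof -
  define s where "s = (f_semi + c) * (diam_pow * q_theta ^ Suc k)"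
  define E where "E = exp f_sup * sup_bound \<Phi> c"
  have s0: "0 \<le> s" unfolding s_def using f_semi_nonneg assms(2) diam_pow_nonneg q_theta_nonneg by simp
  have sT: "s \<le> (f_semi + c) * diam_pow" unfolding s_def
    using f_semi_nonneg assms(2) diam_pow_nonneg q_theta_nonneg q_theta_less_1
    by (intro mult_left_mono mult_left_le power_le_one) auto
  have "Pk Z p f (Suc k) \<Phi> x - Pk Z p f k \<Phi> x
     = (\<Sum>\<zeta>\<in>branches Z (Suc k). weighted \<Phi> (branch_point (Suc k) \<zeta> x) - weighted \<Phi> (branch_point k \<zeta> x))
        / real (card (branches Z (Suc k)))"
    unfolding Pk_eq_average_Suc[of k] Pk_eq_average[of "Suc k"] by (simp add: sum_subtractf diff_divide_distrib)
  also have "\<bar>\<dots>\<bar> \<le> (exp s - 1) * E" unfolding s_def E_def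
    by (rule abs_sum_div_card_le[OF finite_branches branches_ne weighted_branch_point_Suc[OF assms]])
  also have "\<dots> \<le> (s * exp ((f_semi + c) * diam_pow)) * E"
  proof (rule mult_right_mono)
    have "exp s - 1 \<le> s * exp s" by (rule exp_minus_one_le[OF s0])
    also have "\<dots> \<le> s * exp ((f_semi + c) * diam_pow)" using sT s0 by (intro mult_left_mono) auto
    finally show "exp s - 1 \<le> s * exp ((f_semi + c) * diam_pow)" .
    show "0 \<le> E" unfolding E_def using sup_bound_nonneg[OF assms(1)] by simp
  qed
  finally show ?thesis unfolding s_def E_def by (simp add: algebra_simps)
qed

lemma Pk_tendsto_Ptr:
  assumes "\<Phi> \<in> Lcone c" "0 \<le> c" "x \<in> Omega"
  shows "(\<lambda>k. Pk Z p f k \<Phi> x) \<longlonglongrightarrow> Ptr Z p f \<Phi> x"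
  using convergent_of_geometric_increments[OF Pk_Suc_diff[OF assms] q_theta_nonneg q_theta_less_1]
  unfolding Ptr_def by (simp add: convergent_LIMSEQ_iff)

lemma Ptr_Lcone:
  assumes "\<Phi> \<in> Lcone c" "0 \<le> c"
  shows "Ptr Z p f \<Phi> \<in> Lcone ((f_semi + c) * r)"
  unfolding Lcone_def
proof (intro CollectI ballI conjI)
  fix x assume x: "x \<in> Omega"
  show "0 \<le> Ptr Z p f \<Phi> x"
    by (rule LIMSEQ_le_const[OF Pk_tendsto_Ptr[OF assms x]])
       (use Pk_nonneg[OF x Lcone_nonneg[OF assms(1)]] in auto)
  fix y assume y: "y \<in> Omega"
  show "Ptr Z p f \<Phi> x \<le> exp ((f_semi + c) * r * d x y powr \<beta>) * Ptr Z p f \<Phi> y"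
    by (rule LIMSEQ_le[OF Pk_tendsto_Ptr[OF assms x] tendsto_mult_left[OF Pk_tendsto_Ptr[OF assms y]]])
       (use Pk_Lcone_le[OF assms x y] in \<open>simp add: mult.assoc\<close>)
qed

lemma Ptr_linear:
  assumes "\<Phi> \<in> Lcone c" "0 \<le> c" "\<Psi> \<in> Lcone c'" "0 \<le> c'" "x \<in> Omega"
  shows "Ptr Z p f (\<lambda>z. \<alpha> * \<Phi> z + \<gamma> * \<Psi> z) x = \<alpha> * Ptr Z p f \<Phi> x + \<gamma> * Ptr Z p f \<Psi> x"
proof -
  have "(\<lambda>k. \<alpha> * Pk Z p f k \<Phi> x + \<gamma> * Pk Z p f k \<Psi> x) \<longlonglongrightarrow> \<alpha> * Ptr Z p f \<Phi> x + \<gamma> * Ptr Z p f \<Psi> x"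
    by (intro tendsto_add tendsto_mult_left Pk_tendsto_Ptr[OF assms(1,2,5)] Pk_tendsto_Ptr[OF assms(3,4,5)])
  thus ?thesis unfolding Ptr_def[of _ _ _ "\<lambda>z. \<alpha> * \<Phi> z + \<gamma> * \<Psi> z"] Pk_linear by (rule limI)
qed

lemma Ptr_abs_diff_le:
  assumes "\<Phi> \<in> Lcone c" "0 \<le> c" "\<Psi> \<in> Lcone c'" "0 \<le> c'" "x \<in> Omega"
    and "\<And>z. z \<in> Omega \<Longrightarrow> \<bar>\<Phi> z - \<Psi> z\<bar> \<le> D"
  shows "\<bar>Ptr Z p f \<Phi> x - Ptr Z p f \<Psi> x\<bar> \<le> exp f_sup * D"
  by (rule LIMSEQ_le_const2[OF tendsto_rabs[OF tendsto_diff[OF Pk_tendsto_Ptr[OF assms(1,2,5)] Pk_tendsto_Ptr[OF assms(3,4,5)]]]])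
     (use Pk_abs_diff_le[OF assms(5,6)] in auto)

lemma Ptr_cong: "x \<in> Omega \<Longrightarrow> (\<And>z. z \<in> Omega \<Longrightarrow> \<Phi> z = \<Psi> z) \<Longrightarrow> Ptr Z p f \<Phi> x = Ptr Z p f \<Psi> x"
  unfolding Ptr_def using Pk_cong[of x \<Phi> \<Psi>] by presburger

lemma lam_pos: "0 < lam"
proof -
  have "integrable \<nu>0 (Ptr Z p f (\<lambda>_. 1))"
    using nu_eigen Lcone_in_C[OF const_one_Lcone] by blast
  moreover have "exp (- f_sup) * 1 \<le> Ptr Z p f (\<lambda>_. 1) x" if "x \<in> Omega" for x
    by (rule LIMSEQ_le_const[OF Pk_tendsto_Ptr[OF const_one_Lcone order_refl that]])
       (use Pk_ge[OF that, of 1 "\<lambda>_. 1"] in auto)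
  ultimately have "exp (- f_sup) * 1 \<le> lam"
    unfolding lambda_def by (rule integral_ge_const)
  thus ?thesis using exp_gt_zero[of "- f_sup"] by linarith
qed

section \<open>The normalised operator and its contraction\<close>

definition one_Om :: "(int \<Rightarrow> real) \<Rightarrow> real" where
  "one_Om x = (if x \<in> Omega then 1 else 0)"

text \<open>Values outside \<open>Omega\<close> are set to \<open>0\<close>, so that functions agreeing on \<open>Omega\<close> have
  literally equal images.\<close>

definition Lnorm :: "((int \<Rightarrow> real) \<Rightarrow> real) \<Rightarrow> (int \<Rightarrow> real) \<Rightarrow> real" where
  "Lnorm \<Phi> x = (if x \<in> Omega then Ptr Z p f \<Phi> x / lam else 0)"

lemma one_Om_Lcone: "one_Om \<in> Lcone c" if "0 \<le> c"
  unfolding Lcone_def one_Om_def using that by simp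

lemma integral_one_Om: "integral\<^sup>L \<nu>0 one_Om = 1"
proof -
  have "integral\<^sup>L \<nu>0 one_Om = integral\<^sup>L \<nu>0 (\<lambda>_. 1::real)"
    by (rule integral_cong_Omega) (simp add: one_Om_def)
  thus ?thesis using prob_space.prob_space[OF nu_prob] by simp
qed

lemma Lnorm_Lcone: "\<Phi> \<in> Lcone c \<Longrightarrow> 0 \<le> c \<Longrightarrow> Lnorm \<Phi> \<in> Lcone ((f_semi + c) * r)"
  by (rule Lcone_cong[OF Lcone_scale[OF _ Ptr_Lcone, of "1 / lam"]])
     (use lam_pos in \<open>auto simp: Lnorm_def\<close>)

lemma integral_Lnorm:
  assumes "\<Phi> \<in> Lcone c" "0 \<le> c"
  shows "integral\<^sup>L \<nu>0 (Lnorm \<Phi>) = integral\<^sup>L \<nu>0 \<Phi>"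
proof -
  have "integral\<^sup>L \<nu>0 (Lnorm \<Phi>) = integral\<^sup>L \<nu>0 (\<lambda>x. Ptr Z p f \<Phi> x / lam)"
    by (rule integral_cong_Omega) (simp add: Lnorm_def)
  also have "\<dots> = integral\<^sup>L \<nu>0 \<Phi>" using nu_eigen Lcone_in_C[OF assms] lam_pos by simp
  finally show ?thesis .
qed

lemma Lnorm_linear:
  assumes "\<Phi> \<in> Lcone c" "0 \<le> c" "\<Psi> \<in> Lcone c'" "0 \<le> c'"
  shows "Lnorm (\<lambda>z. \<alpha> * \<Phi> z + \<gamma> * \<Psi> z) = (\<lambda>z. \<alpha> * Lnorm \<Phi> z + \<gamma> * Lnorm \<Psi> z)"
  unfolding Lnorm_def using Ptr_linear[OF assms] by (auto simp: fun_eq_iff add_divide_distrib)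

lemma Lnorm_abs_diff_le:
  assumes "\<Phi> \<in> Lcone c" "0 \<le> c" "\<Psi> \<in> Lcone c'" "0 \<le> c'"
    and "\<And>z. z \<in> Omega \<Longrightarrow> \<bar>\<Phi> z - \<Psi> z\<bar> \<le> D"
  shows "\<bar>Lnorm \<Phi> x - Lnorm \<Psi> x\<bar> \<le> exp f_sup / lam * D"
proof (cases "x \<in> Omega")
  case True
  have "\<bar>Lnorm \<Phi> x - Lnorm \<Psi> x\<bar> = \<bar>Ptr Z p f \<Phi> x - Ptr Z p f \<Psi> x\<bar> / lam"
    using True lam_pos by (simp add: Lnorm_def diff_divide_distrib[symmetric])
  also have "\<dots> \<le> exp f_sup * D / lam"
    using Ptr_abs_diff_le[OF assms(1-4) True assms(5)] lam_pos by (simp add: divide_right_mono)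
  finally show ?thesis by simp
next
  case False
  have "0 \<le> D" using assms(5)[OF p_seq_Omega] by linarith
  thus ?thesis using False lam_pos by (simp add: Lnorm_def)
qed

lemma Lnorm_cong:
  assumes "\<And>z. z \<in> Omega \<Longrightarrow> \<Phi> z = \<Psi> z"
  shows "Lnorm \<Phi> = Lnorm \<Psi>"
  unfolding Lnorm_def using Ptr_cong[OF _ assms] by (simp add: fun_eq_iff)

text \<open>\<open>A\<close> is the exponent in the definition of \<open>\<Delta>\<^sub>f\<close> and the fixed point of
  \<open>c \<mapsto> (f_semi + c) r\<close>; the map sends \<open>A + 1\<close> to \<open>A + r\<close>.\<close>

definition A :: real where
  "A = f_semi * (\<eta> powr \<beta> / (1 - \<eta> powr \<beta>))"

lemma A_nonneg: "0 \<le> A"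
  unfolding A_def r_def[symmetric] using f_semi_nonneg r_pos r_less_1 by simp

lemma A_fixed: "(f_semi + A) * r = A"
  unfolding A_def r_def[symmetric] using r_less_1 by (simp add: field_simps)

lemma A_plus_1_mapped: "(f_semi + (A + 1)) * r = A + r"
  using A_fixed by (simp add: algebra_simps)

lemma Lnorm_iter_Lcone:
  assumes "\<Phi> \<in> Lcone c" "0 \<le> c" "(f_semi + c) * r \<le> c"
  shows "(Lnorm ^^ n) \<Phi> \<in> Lcone c"
proof (induction n)
  case (Suc n)
  thus ?case using Lnorm_Lcone[OF Suc assms(2)] Lcone_mono[OF assms(3)] by auto
qed (simp add: assms(1))

lemma A_plus_1_invariant: "(f_semi + (A + 1)) * r \<le> A + 1"
  using A_plus_1_mapped r_less_1 by simp

lemma Lnorm_iter_linear: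
  assumes "\<Phi> \<in> Lcone (A + 1)" "\<Psi> \<in> Lcone (A + 1)"
  shows "(Lnorm ^^ n) (\<lambda>z. \<alpha> * \<Phi> z + \<gamma> * \<Psi> z) = (\<lambda>z. \<alpha> * (Lnorm ^^ n) \<Phi> z + \<gamma> * (Lnorm ^^ n) \<Psi> z)"
proof (induction n)
  case (Suc n)
  have "0 \<le> A + 1" using A_nonneg by simp
  thus ?case
    using Suc Lnorm_linear[OF Lnorm_iter_Lcone[OF assms(1) _ A_plus_1_invariant] _
        Lnorm_iter_Lcone[OF assms(2) _ A_plus_1_invariant]] by simp
qed simp

definition normalized :: "((int \<Rightarrow> real) \<Rightarrow> real) set" where
  "normalized = {\<Phi>. \<Phi> \<in> Lcone (A + 1) \<and> integral\<^sup>L \<nu>0 \<Phi> = 1}"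

definition lower :: real where
  "lower = exp (- (A + r) * diam_pow)"

definition c_gap :: real where
  "c_gap = (1 - r) / ((A + 1) * exp ((A + 1) * diam_pow))"

definition eps :: real where
  "eps = lower * c_gap / 2"

definition q :: real where
  "q = 1 - eps"

definition upper :: real where
  "upper = exp ((A + 1) * diam_pow)"

lemma lower_pos: "0 < lower" and lower_le_1: "lower \<le> 1"
proof -
  have "0 \<le> (A + r) * diam_pow" using A_nonneg r_pos diam_pow_nonneg by simp
  thus "0 < lower" "lower \<le> 1" unfolding lower_def by (auto simp del: minus_add_distrib)
qed

lemma c_gap_pos: "0 < c_gap" and c_gap_le_1: "c_gap \<le> 1"
proof -
  show "0 < c_gap" unfolding c_gap_def using A_nonneg r_less_1 by simp
  have "1 - r \<le> 1 * 1" using r_pos by simp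
  also have "\<dots> \<le> (A + 1) * exp ((A + 1) * diam_pow)"
    using A_nonneg diam_pow_nonneg by (intro mult_mono) auto
  finally show "c_gap \<le> 1" unfolding c_gap_def using A_nonneg by simp
qed

lemma eps_pos: "0 < eps" and eps_le: "eps \<le> lower * c_gap" and eps_less_1: "eps < 1"
proof -
  show "0 < eps" "eps \<le> lower * c_gap" unfolding eps_def using lower_pos c_gap_pos by auto
  have "lower * c_gap \<le> 1" using lower_le_1 c_gap_le_1 c_gap_pos by (simp add: mult_le_one)
  thus "eps < 1" unfolding eps_def by simp
qed

lemma q_pos: "0 < q" and q_less_1: "q < 1"
  unfolding q_def using eps_pos eps_less_1 by auto

lemma gap_exp_estimate:
  assumes "0 \<le> t" "t \<le> diam_pow"
  shows "c_gap * (exp ((A + 1) * t) - 1) \<le> exp ((A + 1) * t) - exp ((A + r) * t)"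
proof -
  have "(1 - r) * t \<le> exp ((1 - r) * t) - 1"
    using exp_ge_add_one_self[of "(1 - r) * t"] by linarith
  also have "\<dots> \<le> exp ((A + r) * t) * (exp ((1 - r) * t) - 1)"
  proof -
    have "0 \<le> (A + r) * t" "0 \<le> (1 - r) * t" using A_nonneg r_pos r_less_1 assms(1) by simp_all
    thus ?thesis using mult_right_mono[of 1 "exp ((A + r) * t)" "exp ((1 - r) * t) - 1"] by simp
  qed
  also have "\<dots> = exp ((A + 1) * t) - exp ((A + r) * t)"
    by (simp add: algebra_simps flip: exp_add)
  finally have gap: "(1 - r) * t \<le> exp ((A + 1) * t) - exp ((A + r) * t)" .
  have "exp ((A + 1) * t) - 1 \<le> (A + 1) * t * exp ((A + 1) * t)"
    by (rule exp_minus_one_le) (use A_nonneg assms in simp)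
  also have "\<dots> \<le> (A + 1) * t * exp ((A + 1) * diam_pow)"
    using A_nonneg assms by (intro mult_left_mono) auto
  finally have "c_gap * (exp ((A + 1) * t) - 1) \<le> c_gap * ((A + 1) * t * exp ((A + 1) * diam_pow))"
    using c_gap_pos by (intro mult_left_mono) auto
  also have "\<dots> = (1 - r) * t"
  proof -
    have "(A + 1) * exp ((A + 1) * diam_pow) \<noteq> 0" using A_nonneg by simp
    thus ?thesis unfolding c_gap_def by simp
  qed
  finally show ?thesis using gap by simp
qed

lemma Lnorm_split:
  assumes "\<Phi> \<in> normalized"
  obtains \<Phi>' where "\<Phi>' \<in> normalized" "Lnorm \<Phi> = (\<lambda>x. eps * one_Om x + q * \<Phi>' x)"
proof -
  have A1: "0 \<le> A + 1" and Ar: "0 \<le> A + r" using A_nonneg r_pos by auto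
  define \<Psi> where "\<Psi> = Lnorm \<Phi>"
  have \<Psi>: "\<Psi> \<in> Lcone (A + r)"
    unfolding \<Psi>_def using Lnorm_Lcone[OF _ A1] assms A_plus_1_mapped by (simp add: normalized_def)
  have \<Psi>_int: "integral\<^sup>L \<nu>0 \<Psi> = 1"
    unfolding \<Psi>_def using integral_Lnorm[OF _ A1] assms by (simp add: normalized_def)
  have \<Psi>_ge: "lower \<le> \<Psi> x" if "x \<in> Omega" for x
    unfolding lower_def using Lcone_normalized_ge[OF \<Psi> Ar \<Psi>_int that] by simp
  define \<Phi>' where "\<Phi>' = (\<lambda>x. (\<Psi> x - eps * one_Om x) / q)"
  have "\<Phi>' \<in> Lcone (A + 1)" unfolding Lcone_def
  proof (intro CollectI ballI conjI)
    fix x assume x: "x \<in> Omega"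
    have "eps \<le> lower" using eps_le mult_left_le[OF c_gap_le_1 less_imp_le[OF lower_pos]] by linarith
    thus "0 \<le> \<Phi>' x"
      unfolding \<Phi>'_def one_Om_def using x \<Psi>_ge[OF x] q_pos by simp
  next
    fix x y assume x: "x \<in> Omega" and y: "y \<in> Omega"
    define t where "t = d x y powr \<beta>"
    have t: "0 \<le> t" "t \<le> diam_pow" unfolding t_def using d_powr_le_diam_pow[OF x y] by auto
    have e1: "0 \<le> exp ((A + 1) * t) - 1" using A1 t by simp
    have e2: "0 \<le> exp ((A + 1) * t) - exp ((A + r) * t)"
      using r_less_1 t by (simp add: mult_right_mono)
    have "eps * (exp ((A + 1) * t) - 1) \<le> (lower * c_gap) * (exp ((A + 1) * t) - 1)"
      by (rule mult_right_mono[OF eps_le e1])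
    also have "\<dots> \<le> lower * (exp ((A + 1) * t) - exp ((A + r) * t))"
      using gap_exp_estimate[OF t] lower_pos by (simp add: mult.assoc)
    also have "\<dots> \<le> \<Psi> y * (exp ((A + 1) * t) - exp ((A + r) * t))"
      by (rule mult_right_mono[OF \<Psi>_ge[OF y] e2])
    finally have "eps * (exp ((A + 1) * t) - 1) \<le> \<Psi> y * (exp ((A + 1) * t) - exp ((A + r) * t))" .
    moreover have "\<Psi> x \<le> exp ((A + r) * t) * \<Psi> y" unfolding t_def by (rule LconeD[OF \<Psi> x y])
    ultimately have "\<Psi> x - eps \<le> exp ((A + 1) * t) * (\<Psi> y - eps)" by (simp add: algebra_simps)
    hence "(\<Psi> x - eps) / q \<le> exp ((A + 1) * t) * ((\<Psi> y - eps) / q)"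
      using q_pos by (simp add: divide_right_mono)
    thus "\<Phi>' x \<le> exp ((A + 1) * d x y powr \<beta>) * \<Phi>' y"
      unfolding \<Phi>'_def one_Om_def t_def using x y by simp
  qed
  moreover have "integral\<^sup>L \<nu>0 \<Phi>' = (integral\<^sup>L \<nu>0 \<Psi> - eps * integral\<^sup>L \<nu>0 one_Om) / q"
    unfolding \<Phi>'_def using Lcone_integrable[OF \<Psi> Ar] Lcone_integrable[OF one_Om_Lcone order_refl] by simp
  hence "integral\<^sup>L \<nu>0 \<Phi>' = 1"
    unfolding \<Psi>_int integral_one_Om q_def using eps_less_1 by simp
  moreover have "Lnorm \<Phi> = (\<lambda>x. eps * one_Om x + q * \<Phi>' x)"
    unfolding \<Phi>'_def \<Psi>_def using q_pos by (auto simp: fun_eq_iff)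
  ultimately show ?thesis using that unfolding normalized_def by blast
qed

lemma normalized_bounds:
  assumes "\<Phi> \<in> normalized" "x \<in> Omega"
  shows "0 \<le> \<Phi> x \<and> \<Phi> x \<le> upper"
proof -
  have "\<Phi> \<in> Lcone (A + 1)" "integral\<^sup>L \<nu>0 \<Phi> = 1" "0 \<le> A + 1"
    using assms(1) A_nonneg unfolding normalized_def by auto
  thus ?thesis unfolding upper_def using Lcone_nonneg[of \<Phi>, OF _ assms(2)] Lcone_normalized_le[of \<Phi>, OF _ _ _ assms(2)]
    by simp
qed

lemma Lnorm_iter_contract:
  "\<Phi> \<in> normalized \<Longrightarrow> \<Psi> \<in> normalized \<Longrightarrow> x \<in> Omega \<Longrightarrow>
    \<bar>(Lnorm ^^ n) \<Phi> x - (Lnorm ^^ n) \<Psi> x\<bar> \<le> upper * q ^ n"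
proof (induction n arbitrary: \<Phi> \<Psi>)
  case 0
  have "0 \<le> \<Phi> x \<and> \<Phi> x \<le> upper" "0 \<le> \<Psi> x \<and> \<Psi> x \<le> upper"
    using normalized_bounds "0.prems" by blast+
  thus ?case by (simp add: abs_le_iff)
next
  case (Suc n)
  obtain \<Phi>' where \<Phi>': "\<Phi>' \<in> normalized" "Lnorm \<Phi> = (\<lambda>x. eps * one_Om x + q * \<Phi>' x)"
    using Lnorm_split[OF Suc.prems(1)] by blast
  obtain \<Psi>' where \<Psi>': "\<Psi>' \<in> normalized" "Lnorm \<Psi> = (\<lambda>x. eps * one_Om x + q * \<Psi>' x)"
    using Lnorm_split[OF Suc.prems(2)] by blast
  have one: "one_Om \<in> Lcone (A + 1)" using A_nonneg one_Om_Lcone by simp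
  have "(Lnorm ^^ Suc n) \<Phi> = (\<lambda>z. eps * (Lnorm ^^ n) one_Om z + q * (Lnorm ^^ n) \<Phi>' z)"
    unfolding funpow_Suc_right o_def \<Phi>'(2)
    by (rule Lnorm_iter_linear[OF one]) (use \<Phi>'(1) in \<open>simp add: normalized_def\<close>)
  moreover have "(Lnorm ^^ Suc n) \<Psi> = (\<lambda>z. eps * (Lnorm ^^ n) one_Om z + q * (Lnorm ^^ n) \<Psi>' z)"
    unfolding funpow_Suc_right o_def \<Psi>'(2)
    by (rule Lnorm_iter_linear[OF one]) (use \<Psi>'(1) in \<open>simp add: normalized_def\<close>)
  ultimately have "(Lnorm ^^ Suc n) \<Phi> x - (Lnorm ^^ Suc n) \<Psi> x = q * ((Lnorm ^^ n) \<Phi>' x - (Lnorm ^^ n) \<Psi>' x)"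
    by (simp add: right_diff_distrib)
  hence "\<bar>(Lnorm ^^ Suc n) \<Phi> x - (Lnorm ^^ Suc n) \<Psi> x\<bar> = q * \<bar>(Lnorm ^^ n) \<Phi>' x - (Lnorm ^^ n) \<Psi>' x\<bar>"
    using q_pos by (simp only: abs_mult abs_of_pos)
  also have "\<dots> \<le> q * (upper * q ^ n)"
    using mult_left_mono[OF Suc.IH[OF \<Phi>'(1) \<Psi>'(1) Suc.prems(3)]] q_pos by simp
  finally show ?case by (simp only: power_Suc mult.left_commute)
qed

section \<open>The eigenfunction\<close>

definition one_iter :: "nat \<Rightarrow> (int \<Rightarrow> real) \<Rightarrow> real" where
  "one_iter n = (Lnorm ^^ n) one_Om"

definition h :: "(int \<Rightarrow> real) \<Rightarrow> real" where
  "h x = lim (\<lambda>n. one_iter n x)"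

lemma one_iter_Lcone: "one_iter n \<in> Lcone A"
  unfolding one_iter_def using Lnorm_iter_Lcone[OF one_Om_Lcone[OF A_nonneg] A_nonneg] A_fixed by simp

lemma integral_one_iter: "integral\<^sup>L \<nu>0 (one_iter n) = 1"
proof (induction n)
  case (Suc n)
  thus ?case using integral_Lnorm[OF one_iter_Lcone A_nonneg] by (simp add: one_iter_def)
qed (simp add: one_iter_def integral_one_Om)

lemma one_iter_normalized: "one_iter n \<in> normalized"
  unfolding normalized_def using one_iter_Lcone integral_one_iter Lcone_mono[of A "A + 1"] by auto

lemma one_iter_outside: "x \<notin> Omega \<Longrightarrow> one_iter n x = 0"
  by (cases n) (simp_all add: one_iter_def one_Om_def Lnorm_def)

lemma one_iter_shift: "x \<in> Omega \<Longrightarrow> \<bar>one_iter (j + n) x - one_iter n x\<bar> \<le> upper * q ^ n"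
  using Lnorm_iter_contract[OF one_iter_normalized[of j] one_iter_normalized[of 0]]
  unfolding one_iter_def by (simp add: funpow_add add.commute[of j])

lemma one_iter_tendsto_h: "(\<lambda>n. one_iter n x) \<longlonglongrightarrow> h x"
proof (cases "x \<in> Omega")
  case True
  have "convergent (\<lambda>n. one_iter n x)"
    by (rule convergent_of_geometric_increments[OF _ less_imp_le[OF q_pos] q_less_1])
       (use one_iter_shift[OF True, of 1] in simp)
  thus ?thesis unfolding h_def by (simp add: convergent_LIMSEQ_iff)
qed (simp add: h_def one_iter_outside)

lemma h_outside: "x \<notin> Omega \<Longrightarrow> h x = 0"
  using one_iter_tendsto_h[of x] one_iter_outside by (simp add: LIMSEQ_const_iff)

lemma h_one_iter_dist: "x \<in> Omega \<Longrightarrow> \<bar>h x - one_iter n x\<bar> \<le> upper * q ^ n"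
  using LIMSEQ_ignore_initial_segment[OF one_iter_tendsto_h[of x], of n] one_iter_shift[of x _ n]
  by (intro LIMSEQ_le_const2[OF tendsto_rabs[OF tendsto_diff[OF _ tendsto_const]]]) auto

lemma h_Lcone: "h \<in> Lcone A"
  unfolding Lcone_def
proof (intro CollectI ballI conjI)
  fix x assume x: "x \<in> Omega"
  show "0 \<le> h x"
    by (rule LIMSEQ_le_const[OF one_iter_tendsto_h]) (use Lcone_nonneg[OF one_iter_Lcone x] in auto)
  fix y assume y: "y \<in> Omega"
  show "h x \<le> exp (A * d x y powr \<beta>) * h y"
    by (rule LIMSEQ_le[OF one_iter_tendsto_h tendsto_mult_left[OF one_iter_tendsto_h]])
       (use LconeD[OF one_iter_Lcone x y] in auto)
qed

lemma integral_h: "integral\<^sup>L \<nu>0 h = 1"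
proof -
  have "\<bar>integral\<^sup>L \<nu>0 h - 1\<bar> \<le> upper * q ^ n" for n
  proof -
    have int: "integrable \<nu>0 (\<lambda>x. h x - one_iter n x)"
      using Lcone_integrable[OF h_Lcone A_nonneg] Lcone_integrable[OF one_iter_Lcone A_nonneg] by simp
    have "integral\<^sup>L \<nu>0 h - 1 = integral\<^sup>L \<nu>0 (\<lambda>x. h x - one_iter n x)"
      using Lcone_integrable[OF h_Lcone A_nonneg] Lcone_integrable[OF one_iter_Lcone A_nonneg]
        integral_one_iter[of n] by simp
    moreover have "integral\<^sup>L \<nu>0 (\<lambda>x. h x - one_iter n x) \<le> upper * q ^ n"
      by (rule integral_le_const[OF int]) (use h_one_iter_dist in \<open>auto simp: abs_le_iff\<close>)
    moreover have "- (upper * q ^ n) \<le> integral\<^sup>L \<nu>0 (\<lambda>x. h x - one_iter n x)"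
    proof (rule integral_ge_const[OF int])
      fix x assume "x \<in> Omega"
      thus "- (upper * q ^ n) \<le> h x - one_iter n x" using h_one_iter_dist[of x n] by linarith
    qed
    ultimately show ?thesis by (simp add: abs_le_iff)
  qed
  hence "integral\<^sup>L \<nu>0 h - 1 = 0"
    by (rule eq_zero_of_abs_le_geometric[OF _ less_imp_le[OF q_pos] q_less_1])
  thus ?thesis by simp
qed

lemma h_normalized: "h \<in> normalized"
  unfolding normalized_def using h_Lcone integral_h Lcone_mono[of A "A + 1"] by auto

lemma Lnorm_h: "Lnorm h = h"
proof
  fix x show "Lnorm h x = h x"
  proof (cases "x \<in> Omega")
    case True
    have "\<bar>Lnorm h x - h x\<bar> \<le> (exp f_sup / lam * upper + upper * q) * q ^ n" for n
    proof -
      have "\<bar>Lnorm h x - Lnorm (one_iter n) x\<bar> \<le> exp f_sup / lam * (upper * q ^ n)"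
        by (rule Lnorm_abs_diff_le[OF h_Lcone A_nonneg one_iter_Lcone A_nonneg h_one_iter_dist])
      moreover have "\<bar>Lnorm (one_iter n) x - h x\<bar> \<le> upper * q ^ Suc n"
        using h_one_iter_dist[OF True, of "Suc n"] by (simp add: one_iter_def abs_minus_commute)
      ultimately show ?thesis by (simp add: algebra_simps abs_le_iff)
    qed
    hence "Lnorm h x - h x = 0"
      by (rule eq_zero_of_abs_le_geometric[OF _ less_imp_le[OF q_pos] q_less_1])
    thus ?thesis by simp
  qed (simp add: Lnorm_def h_outside)
qed

lemma Lnorm_fixed_point_unique:
  assumes "g \<in> normalized" "Lnorm g = g" "x \<in> Omega"
  shows "g x = h x"
proof -
  have "(Lnorm ^^ n) g = g" "(Lnorm ^^ n) h = h" for n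
    by (induction n) (simp_all add: assms(2) Lnorm_h)
  hence "\<bar>g x - h x\<bar> \<le> upper * q ^ n" for n
    using Lnorm_iter_contract[OF assms(1) h_normalized assms(3), of n] by simp
  hence "g x - h x = 0" by (rule eq_zero_of_abs_le_geometric[OF _ less_imp_le[OF q_pos] q_less_1])
  thus ?thesis by simp
qed

lemma h_pos: "x \<in> Omega \<Longrightarrow> 0 < h x"
  using Lcone_normalized_ge[OF h_Lcone A_nonneg integral_h] by (meson exp_gt_zero less_le_trans)

lemma Pk_h_tendsto: "x \<in> Omega \<Longrightarrow> (\<lambda>k. Pk Z p f k h x) \<longlonglongrightarrow> lam * h x"
proof -
  assume x: "x \<in> Omega"
  have "Ptr Z p f h x = lam * h x" using fun_cong[OF Lnorm_h, of x] x lam_pos by (simp add: Lnorm_def field_simps)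
  thus ?thesis using Pk_tendsto_Ptr[OF h_Lcone A_nonneg x] by simp
qed

lemma eigenfunction_unique:
  assumes "g \<in> Lcone A" "integral\<^sup>L \<nu>0 g = 1"
    and "\<forall>x\<in>Omega. (\<lambda>k. Pk Z p f k g x) \<longlonglongrightarrow> lam * g x" "x \<in> Omega"
  shows "g x = h x"
proof -
  define g0 where "g0 = (\<lambda>x. if x \<in> Omega then g x else 0)"
  have "g0 \<in> Lcone A" by (rule Lcone_cong[OF assms(1)]) (simp add: g0_def)
  moreover have "integral\<^sup>L \<nu>0 g0 = 1"
    using assms(2) integral_cong_Omega[of g0 g] by (simp add: g0_def)
  ultimately have "g0 \<in> normalized" unfolding normalized_def using Lcone_mono[of A "A + 1"] by auto
  moreover have "Lnorm g0 = g0"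
  proof
    fix y
    have "Ptr Z p f g y = lam * g y" if "y \<in> Omega"
      unfolding Ptr_def using assms(3) that by (simp add: limI)
    thus "Lnorm g0 y = g0 y"
      using Lnorm_cong[of g0 g] lam_pos by (simp add: Lnorm_def g0_def)
  qed
  ultimately have "g0 x = h x" by (rule Lnorm_fixed_point_unique[OF _ _ assms(4)])
  thus ?thesis using assms(4) by (simp add: g0_def)
qed

lemma Delta_f_iff:
  "\<Phi> \<in> Delta_f dI \<theta> p \<beta> \<eta> f \<nu>0 \<longleftrightarrow> d_continuous dI \<theta> \<Phi> \<and> integral\<^sup>L \<nu>0 \<Phi> = 1 \<and> \<Phi> \<in> Lcone A"
  unfolding Delta_f_def Lcone_def Bfun_def A_def f_semi_def by auto

end

theorem mainTheorem5:
  fixes dI :: "real \<Rightarrow> real \<Rightarrow> real"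
    and \<theta> \<eta> \<beta> lam p :: real
    and \<tau> :: "real \<Rightarrow> real"
    and Z :: "(real \<Rightarrow> real) set"
    and f :: "(int \<Rightarrow> real) \<Rightarrow> real"
    and \<nu>0 :: "(int \<Rightarrow> real) measure"
  assumes metric: "is_metric_on Icar dI"
    and dI_bdd: "\<exists>M. \<forall>s\<in>Icar. \<forall>t\<in>Icar. dI s t \<le> M"
    and theta: "0 < \<theta>" "\<theta> < 1"
    and beta: "0 < \<beta>" "\<beta> \<le> 1"
    and eta: "0 < \<eta>" "\<eta> < 1"
    and tau_maps: "\<forall>s\<in>Icar. \<tau> s \<in> Icar"
    and Z_fin: "finite Z"
    and Z_inv: "\<forall>\<zeta>\<in>Z. \<forall>t\<in>Icar. \<zeta> t \<in> Icar \<and> \<tau> (\<zeta> t) = t"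
    and Z_full: "\<forall>t\<in>Icar. {s\<in>Icar. \<tau> s = t} = (\<lambda>\<zeta>. \<zeta> t) ` Z
                   \<and> card {s\<in>Icar. \<tau> s = t} = card Z"
    and Z_contr: "\<forall>\<zeta>\<in>Z. \<forall>s\<in>Icar. \<forall>t\<in>Icar. dI (\<zeta> s) (\<zeta> t) \<le> \<eta> * dI s t"
    and p_fix: "p \<in> Icar" "\<tau> p = p"
    and f_C: "in_C dI \<theta> p \<beta> f"
    and nu_prob: "prob_space \<nu>0"
    and nu_space: "space \<nu>0 = Omega"
    and nu_sets: "sets \<nu>0 = sigma_sets Omega {U. d_open dI \<theta> U}"
    and lambda_def: "lam = integral\<^sup>L \<nu>0 (Ptr Z p f (\<lambda>_. 1))"
    and nu_eigen: "\<forall>\<Phi>. in_C dI \<theta> p \<beta> \<Phi> \<longrightarrow>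
                     integrable \<nu>0 (Ptr Z p f \<Phi>) \<and>
                     integral\<^sup>L \<nu>0 (Ptr Z p f \<Phi>) = lam * integral\<^sup>L \<nu>0 \<Phi>"
  shows "\<exists>h\<in>Delta_f dI \<theta> p \<beta> \<eta> f \<nu>0.
           (\<forall>x\<in>Omega. (\<lambda>k. Pk Z p f k h x) \<longlonglongrightarrow> lam * h x) \<and>
           (\<forall>g\<in>Delta_f dI \<theta> p \<beta> \<eta> f \<nu>0.
              (\<forall>x\<in>Omega. (\<lambda>k. Pk Z p f k g x) \<longlonglongrightarrow> lam * g x) \<longrightarrow> (\<forall>x\<in>Omega. g x = h x)) \<and>
           (\<forall>x\<in>Omega. 0 < h x)"
proof -
  have Z_ne: "Z \<noteq> {}" using Z_full p_fix by blast
  have Z_maps: "\<forall>\<zeta>\<in>Z. \<forall>t\<in>Icar. \<zeta> t \<in> Icar" using Z_inv by blast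
  interpret rpf_setting dI \<theta> \<eta> \<beta> lam p Z f \<nu>0
    using metric dI_bdd theta beta eta Z_fin Z_ne Z_maps Z_contr p_fix(1) f_C nu_prob nu_space nu_sets
      lambda_def nu_eigen by (rule rpf_setting.intro)
  show ?thesis
  proof (intro bexI[of _ h] conjI ballI impI)
    show "h \<in> Delta_f dI \<theta> p \<beta> \<eta> f \<nu>0"
      unfolding Delta_f_iff using Lcone_d_continuous[OF h_Lcone A_nonneg] integral_h h_Lcone by simp
    show "\<And>g x. g \<in> Delta_f dI \<theta> p \<beta> \<eta> f \<nu>0 \<Longrightarrow>
        \<forall>x\<in>Omega. (\<lambda>k. Pk Z p f k g x) \<longlonglongrightarrow> lam * g x \<Longrightarrow> x \<in> Omega \<Longrightarrow> g x = h x"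
      using eigenfunction_unique by (simp add: Delta_f_iff)
  qed (simp_all add: Pk_h_tendsto h_pos)
qed

end
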